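(* Let $T$ be a tree on vertex set $\{1,\dots,n\}$, $n\ge2$, let $k\ge2$, and let $M$ be the order-$k$ Steiner distance hypermatrix of $T$. Let $Z$ be the zeta matrix of $T$ rooted at vertex $n$. Then for all $\mathbf{c}_1,\ldots,\mathbf{c}_k\in\mathbb{R}^n$: if $k$ is even, $$M(\mathbf{c}_1,\ldots,\mathbf{c}_k)=\big(U-2(\mathbb{I}^k_{n-1}\oplus[0])\big)(Z\mathbf{c}_1,\ldots,Z\mathbf{c}_k);$$ if $k$ is odd, $$M(\mathbf{c}_1,\ldots,\mathbf{c}_k)=U(Z\mathbf{c}_1,\ldots,Z\mathbf{c}_k).$$
   Context: For $U'\subseteq V(T)$, the Steiner distance $S(U')$ is the minimum number of edges of a connected subgraph of $T$ whose vertex set contains $U'$. The order-$k$ Steiner distance hypermatrix $M$ has entries $M_{(i_1,\dots,i_k)}=S(\{i_1,\dots,i_k\})$, and for any order-$k$, dimension-$n$ hypermatrix $H$, $H(\mathbf{x}_1,\dots,\mathbf{x}_k)=\sum_{\mathbf{i}\in[n]^k}H_{\mathbf{i}}\prod_{j=1}^k x_{j i_j}$. The zeta matrix $Z$ of $T$ rooted at $n$ is the $n\times n$ matrix with $Z_{xy}=1$ if $x$ lies on the unique path in $T$ from $y$ to $n$ (including the endpoints), and $Z_{xy}=0$ otherwise. $U$ is the order-$k$, dimension-$n$ hypermatrix whose $(i_1,\dots,i_k)$ entry equals $(-1)^{t-1}$ if there exist a vertex $w\in\{1,\dots,n-1\}$ and a set $S\subseteq\{1,\dots,k\}$ with $|S|=t$,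 $1\le t\le k-1$, such that $i_j=w$ for $j\in S$ and $i_j=n$ for $j\notin S$; and $0$ otherwise. $\mathbb{I}^k_{n-1}\oplus[0]$ is the order-$k$, dimension-$n$ hypermatrix whose $(i_1,\dots,i_k)$ entry is $1$ if $i_1=\dots=i_k\in\{1,\dots,n-1\}$ and $0$ otherwise. *)

theory Defs
  imports Complex_Main
begin

definition adj :: "nat set set \<Rightarrow> nat \<Rightarrow> nat \<Rightarrow> bool" where
  "adj F x y \<longleftrightarrow> {x, y} \<in> F \<and> x \<noteq> y"

definition connected_graph :: "nat set \<Rightarrow> nat set set \<Rightarrow> bool" where
  "connected_graph W F \<longleftrightarrow> (\<forall>x\<in>W. \<forall>y\<in>W. (adj F)\<^sup>*\<^sup>* x y)"

text \<open>A tree on {1..n}: a connected graph in which no edge lies on a cycle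
  (i.e. acyclic: removing any edge disconnects its endpoints).\<close>
definition is_tree :: "nat \<Rightarrow> nat set set \<Rightarrow> bool" where
  "is_tree n E \<longleftrightarrow>
     (\<forall>e\<in>E. e \<subseteq> {1..n} \<and> card e = 2) \<and>
     connected_graph {1..n} E \<and>
     (\<forall>x y. {x, y} \<in> E \<longrightarrow> x \<noteq> y \<longrightarrow> \<not> (adj (E - {{x, y}}))\<^sup>*\<^sup>* x y)"

definition steiner :: "nat \<Rightarrow> nat set set \<Rightarrow> nat set \<Rightarrow> nat" where
  "steiner n E U' = Min {card F | F W. F \<subseteq> E \<and> W \<subseteq> {1..n} \<and> U' \<subseteq> W \<and>
                          (\<forall>e\<in>F. e \<subseteq> W) \<and> connected_graph W F}"

text \<open>Hypermatrices of order k, dimension n: functions on index lists of length k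
  with entries in {1..n}. Vectors in R^n are functions on {1..n}; a k-tuple of vectors
  is indexed by j < k.\<close>
definition hm_indices :: "nat \<Rightarrow> nat \<Rightarrow> nat list set" where
  "hm_indices n k = {i. length i = k \<and> set i \<subseteq> {1..n}}"

definition hm_form :: "nat \<Rightarrow> nat \<Rightarrow> (nat list \<Rightarrow> real) \<Rightarrow> (nat \<Rightarrow> nat \<Rightarrow> real) \<Rightarrow> real" where
  "hm_form n k H x = (\<Sum>i\<in>hm_indices n k. H i * (\<Prod>j<k. x j (i ! j)))"

definition steiner_hm :: "nat \<Rightarrow> nat set set \<Rightarrow> nat list \<Rightarrow> real" where
  "steiner_hm n E i = real (steiner n E (set i))"

definition is_path :: "nat set set \<Rightarrow> nat list \<Rightarrow> nat \<Rightarrow> nat \<Rightarrow> bool" where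
  "is_path E p a b \<longleftrightarrow> p \<noteq> [] \<and> hd p = a \<and> last p = b \<and> distinct p \<and>
      (\<forall>j. Suc j < length p \<longrightarrow> adj E (p ! j) (p ! Suc j))"

definition zeta :: "nat \<Rightarrow> nat set set \<Rightarrow> nat \<Rightarrow> nat \<Rightarrow> real" where
  "zeta n E x y = (if \<exists>p. is_path E p y n \<and> x \<in> set p then 1 else 0)"

definition zeta_mult :: "nat \<Rightarrow> nat set set \<Rightarrow> (nat \<Rightarrow> real) \<Rightarrow> nat \<Rightarrow> real" where
  "zeta_mult n E c = (\<lambda>x. \<Sum>y=1..n. zeta n E x y * c y)"

text \<open>The hypermatrix U (positions in index lists are 0..k-1).\<close>
definition U_cond :: "nat \<Rightarrow> nat \<Rightarrow> nat list \<Rightarrow> nat \<Rightarrow> bool" where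
  "U_cond n k i t \<longleftrightarrow> (\<exists>w\<in>{1..n-1}. \<exists>S\<subseteq>{..<k}. card S = t \<and> 1 \<le> t \<and> t \<le> k - 1 \<and>
      (\<forall>j<k. i ! j = (if j \<in> S then w else n)))"

definition U_hm :: "nat \<Rightarrow> nat \<Rightarrow> nat list \<Rightarrow> real" where
  "U_hm n k i = (if \<exists>t. U_cond n k i t then (-1) ^ ((THE t. U_cond n k i t) - 1) else 0)"

definition Id_hm :: "nat \<Rightarrow> nat \<Rightarrow> nat list \<Rightarrow> real" where
  "Id_hm n k i = (if \<exists>v\<in>{1..n-1}. \<forall>j<k. i ! j = v then 1 else 0)"

end

theory Submission
  imports Defs
begin

(* Root T at n. For a nonempty vertex set W, a minimal connected subgraph containing W uses
   exactly the edges {v, parent v} for which the subtree below v contains some, but not all,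
   of W. Hence, writing D v for the set of vertices below v, S(W) is the sum over v \<noteq> n
   of 1 - [W \<subseteq> D v] - [W \<inter> D v = {}].
   Inserting this into M(c_1, ..., c_k), each indicator factorizes over the k positions, and
   since (Z c)_v is the sum of c below v and (Z c)_n is the total sum of c, the form becomes
     \<Sum>_v  \<Prod>_j (Z c_j)_n - \<Prod>_j (Z c_j)_v - \<Prod>_j ((Z c_j)_n - (Z c_j)_v).
   Expanding the last product over subsets of positions, the proper nonempty subsets give
   exactly the entries of U, and the two extreme subsets leave (1 + (-1)^k) \<Prod>_j (Z c_j)_v,
   the diagonal term -2 I for even k, which vanishes for odd k. *)

section \<open>Paths in graphs\<close>

lemma adj_sym: "adj F x y \<Longrightarrow> adj F y x"
  by (auto simp: adj_def insert_commute)

lemma rtranclp_adj_sym: "(adj F)\<^sup>*\<^sup>* x y \<Longrightarrow> (adj F)\<^sup>*\<^sup>* y x"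
  by (induction rule: rtranclp_induct) (auto intro: converse_rtranclp_into_rtranclp adj_sym)

lemma rtranclp_crossing:
  assumes "r\<^sup>*\<^sup>* a b" "P a" "\<not> P b"
  shows "\<exists>x y. r x y \<and> P x \<and> \<not> P y"
  using assms by (induction rule: rtranclp_induct) auto

lemma is_path_Cons:
  "is_path E (x # p) a b \<longleftrightarrow> x = a \<and>
     (if p = [] then b = a else adj E a (hd p) \<and> a \<notin> set p \<and> is_path E p (hd p) b)"
proof (cases p)
  case (Cons y q)
  have "(\<forall>j. Suc j < length (x # p) \<longrightarrow> adj E ((x # p) ! j) ((x # p) ! Suc j)) \<longleftrightarrow>
        adj E x y \<and> (\<forall>j. Suc j < length p \<longrightarrow> adj E (p ! j) (p ! Suc j))"
    using Cons by (auto simp: All_less_Suc2)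
  then show ?thesis using Cons by (auto simp: is_path_def)
qed (auto simp: is_path_def)

lemma is_path_drop:
  "is_path E p a b \<Longrightarrow> i < length p \<Longrightarrow> is_path E (drop i p) (p ! i) b"
  by (auto simp: is_path_def hd_drop_conv_nth last_drop)

lemma rtranclp_imp_is_path:
  assumes "(adj E)\<^sup>*\<^sup>* a b"
  shows "\<exists>p. is_path E p a b"
  using assms
proof (induction rule: converse_rtranclp_induct)
  case base
  show ?case by (rule exI[of _ "[b]"]) (simp add: is_path_def)
next
  case (step a a')
  then obtain p where p: "is_path E p a' b" by blast
  show ?case
  proof (cases "a \<in> set p")
    case True
    then obtain i where "i < length p" "p ! i = a" by (auto simp: in_set_conv_nth)
    then show ?thesis using is_path_drop[OF p] by metis
  next
    case False
    have "p \<noteq> []" "hd p = a'" using p by (auto simp: is_path_def)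
    then have "is_path E (a # p) a b" using False p step(1) by (auto simp: is_path_Cons)
    then show ?thesis by blast
  qed
qed

lemma is_path_imp_rtranclp_avoiding:
  assumes "is_path E p a b" "v \<notin> set p" "v \<in> e"
  shows "(adj (E - {e}))\<^sup>*\<^sup>* a b"
  using assms
proof (induction p arbitrary: a)
  case (Cons x p)
  show ?case
  proof (cases "p = []")
    case False
    then have p: "adj E a (hd p)" "is_path E p (hd p) b" "v \<noteq> a" "v \<notin> set p"
      using Cons.prems by (auto simp: is_path_Cons)
    have "v \<noteq> hd p" using False p(4) by auto
    then have "adj (E - {e}) a (hd p)" using p(1,3) Cons.prems(3) by (auto simp: adj_def)
    moreover have "(adj (E - {e}))\<^sup>*\<^sup>* (hd p) b" using Cons.IH p(2,4) Cons.prems(3) .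
    ultimately show ?thesis by (rule converse_rtranclp_into_rtranclp)
  qed (use Cons.prems in \<open>simp add: is_path_Cons\<close>)
qed (simp add: is_path_def)

section \<open>Trees rooted at \<open>n\<close>\<close>

locale rooted_tree =
  fixes n :: nat and E :: "nat set set"
  assumes is_tree: "is_tree n E" and root_vertex: "1 \<le> n"
begin

lemma edge_subset: "e \<in> E \<Longrightarrow> e \<subseteq> {1..n}"
  using is_tree by (auto simp: is_tree_def)

lemma finite_edges: "finite E"
  using edge_subset by (intro finite_subset[of E "Pow {1..n}"]) auto

lemma adj_vertices: "adj E x y \<Longrightarrow> x \<in> {1..n} \<and> y \<in> {1..n}"
  using edge_subset by (meson adj_def insert_subset)

lemma is_path_start_vertex: "is_path E p a b \<Longrightarrow> a \<noteq> b \<Longrightarrow> a \<in> {1..n}"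
proof (cases p)
  case (Cons x q)
  assume "is_path E p a b" "a \<noteq> b"
  then have "adj E a (hd q)" using Cons by (auto simp: is_path_Cons split: if_splits)
  then show ?thesis using adj_vertices by blast
qed (simp add: is_path_def)

lemma is_path_Cons_hd_eq:
  assumes "is_path E (a # p) a b" "is_path E (a # q) a b" "p \<noteq> []" "q \<noteq> []"
  shows "hd p = hd q"
proof (rule ccontr)
  assume ne: "hd p \<noteq> hd q"
  \<comment> \<open>then \<open>hd p \<leadsto> b \<leadsto> hd q \<leadsto> a\<close> is a walk avoiding the bridge \<open>{a, hd p}\<close>\<close>
  let ?e = "{a, hd p}"
  have p: "adj E a (hd p)" "a \<notin> set p" "is_path E p (hd p) b"
    and q: "adj E a (hd q)" "a \<notin> set q" "is_path E q (hd q) b"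
    using assms by (auto simp: is_path_Cons)
  have "(adj (E - {?e}))\<^sup>*\<^sup>* (hd p) b" "(adj (E - {?e}))\<^sup>*\<^sup>* (hd q) b"
    using is_path_imp_rtranclp_avoiding p(2,3) q(2,3) by auto
  moreover have "adj (E - {?e}) (hd q) a"
    using p(1) q(1) ne by (auto simp: adj_def doubleton_eq_iff insert_commute)
  ultimately have "(adj (E - {?e}))\<^sup>*\<^sup>* a (hd p)"
    by (meson rtranclp_adj_sym rtranclp.rtrancl_into_rtrancl rtranclp_trans)
  then show False
    using is_tree p(1) by (auto simp: is_tree_def adj_def)
qed

lemma is_path_unique: "is_path E p a b \<Longrightarrow> is_path E q a b \<Longrightarrow> p = q"
proof (induction p arbitrary: a q)
  case (Cons x p)
  obtain q' where q: "q = a # q'"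
    using Cons.prems(2) by (cases q) (auto simp: is_path_Cons is_path_def)
  have "x = a" using Cons.prems(1) by (simp add: is_path_Cons)
  consider "p = []" "q' = []" | "p \<noteq> []" "q' \<noteq> []"
    using Cons.prems q \<open>x = a\<close> by (fastforce simp: is_path_Cons is_path_def)
  then show ?case
  proof cases
    case 2
    then have "hd p = hd q'"
      using is_path_Cons_hd_eq Cons.prems q \<open>x = a\<close> by blast
    then show ?thesis
      using 2 Cons q \<open>x = a\<close> by (auto simp: is_path_Cons)
  qed (use q \<open>x = a\<close> in simp)
qed (simp add: is_path_def)

definition root_path :: "nat \<Rightarrow> nat list" where
  "root_path y = (THE p. is_path E p y n)"

text \<open>\<open>parent n\<close> is unspecified, as \<open>root_path n = [n]\<close>.\<close>

definition parent :: "nat \<Rightarrow> nat" where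
  "parent y = root_path y ! 1"

definition ancestor :: "nat \<Rightarrow> nat \<Rightarrow> bool" where
  "ancestor x y \<longleftrightarrow> x \<in> set (root_path y)"

lemma root_path_eq: "is_path E p y n \<Longrightarrow> root_path y = p"
  unfolding root_path_def using is_path_unique by blast

lemma is_path_root_path: "y \<in> {1..n} \<Longrightarrow> is_path E (root_path y) y n"
proof -
  assume "y \<in> {1..n}"
  then have "(adj E)\<^sup>*\<^sup>* y n"
    using is_tree root_vertex by (auto simp: is_tree_def connected_graph_def)
  then show ?thesis using rtranclp_imp_is_path root_path_eq by metis
qed

lemma root_path_root: "root_path n = [n]"
  by (rule root_path_eq) (simp add: is_path_def)

lemma root_path_Cons:
  assumes "y \<in> {1..n}" "y \<noteq> n"
  shows "root_path y = y # root_path (parent y) \<and> adj E y (parent y)"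
proof -
  have p: "is_path E (root_path y) y n" using assms(1) by (rule is_path_root_path)
  then obtain q where q: "root_path y = y # q"
    by (cases "root_path y") (auto simp: is_path_def)
  with p assms(2) have "q \<noteq> []" by (auto simp: is_path_Cons)
  with p q have "adj E y (hd q)" "is_path E q (hd q) n" by (auto simp: is_path_Cons)
  moreover have "parent y = hd q" using q \<open>q \<noteq> []\<close> by (simp add: parent_def hd_conv_nth)
  ultimately show ?thesis using q root_path_eq by auto
qed

lemma parent_vertex: "y \<in> {1..n} \<Longrightarrow> y \<noteq> n \<Longrightarrow> parent y \<in> {1..n}"
  using root_path_Cons adj_vertices by blast

lemma ancestor_refl: "y \<in> {1..n} \<Longrightarrow> ancestor y y"
  by (metis ancestor_def is_path_def hd_in_set is_path_root_path)

lemma ancestor_root: "y \<in> {1..n} \<Longrightarrow> ancestor n y"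
  by (metis ancestor_def is_path_def last_in_set is_path_root_path)

lemma ancestor_of_root: "ancestor x n \<longleftrightarrow> x = n"
  by (simp add: ancestor_def root_path_root)

lemma ancestor_iff_parent:
  "y \<in> {1..n} \<Longrightarrow> ancestor x y \<longleftrightarrow> x = y \<or> (y \<noteq> n \<and> ancestor x (parent y))"
  using root_path_Cons[of y] root_path_root by (cases "y = n") (auto simp: ancestor_def)

lemma ancestor_root_path_drop:
  assumes "y \<in> {1..n}" "ancestor x y"
  obtains i where "i < length (root_path y)" "root_path x = drop i (root_path y)"
    "root_path y ! i = x"
proof -
  obtain i where "i < length (root_path y)" "root_path y ! i = x"
    using assms(2) by (auto simp: ancestor_def in_set_conv_nth)
  moreover have "root_path x = drop i (root_path y)"
    using is_path_drop[OF is_path_root_path[OF assms(1)]] calculation root_path_eq by metis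
  ultimately show ?thesis using that by blast
qed

lemma ancestor_trans: "y \<in> {1..n} \<Longrightarrow> ancestor x z \<Longrightarrow> ancestor z y \<Longrightarrow> ancestor x y"
  by (metis ancestor_def ancestor_root_path_drop in_set_dropD)

lemma ancestor_linear:
  assumes "y \<in> {1..n}" "ancestor x y" "ancestor z y"
  shows "ancestor x z \<or> ancestor z x"
proof -
  obtain i where i: "i < length (root_path y)" "root_path x = drop i (root_path y)"
    "root_path y ! i = x"
    using ancestor_root_path_drop assms(1,2) by metis
  obtain j where j: "j < length (root_path y)" "root_path z = drop j (root_path y)"
    "root_path y ! j = z"
    using ancestor_root_path_drop assms(1,3) by metis
  show ?thesis
  proof (cases "i \<le> j")
    case True
    then have "root_path x ! (j - i) = z" "j - i < length (root_path x)" using i j by auto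
    then show ?thesis by (metis ancestor_def nth_mem)
  next
    case False
    then have "root_path z ! (i - j) = x" "i - j < length (root_path z)" using i j by auto
    then show ?thesis by (metis ancestor_def nth_mem)
  qed
qed

lemma ancestor_length_less:
  assumes "y \<in> {1..n}" "ancestor x y" "x \<noteq> y"
  shows "length (root_path x) < length (root_path y)"
proof -
  obtain i where i: "i < length (root_path y)" "root_path x = drop i (root_path y)"
    "root_path y ! i = x"
    using ancestor_root_path_drop assms by metis
  have "hd (root_path y) = y" using is_path_root_path[OF assms(1)] by (simp add: is_path_def)
  moreover have "root_path y \<noteq> []" using i(1) by auto
  ultimately have "i \<noteq> 0" using i(3) assms(3) by (metis hd_conv_nth)
  then show ?thesis using i(1,2) by simp
qed

lemma ancestor_vertex: "y \<in> {1..n} \<Longrightarrow> ancestor x y \<Longrightarrow> x \<in> {1..n}"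
proof (cases "x = n")
  case False
  assume "y \<in> {1..n}" "ancestor x y"
  then obtain i where "i < length (root_path y)" "root_path y ! i = x"
    by (auto simp: ancestor_def in_set_conv_nth)
  then have "is_path E (drop i (root_path y)) x n"
    using is_path_drop[OF is_path_root_path[OF \<open>y \<in> {1..n}\<close>]] by metis
  then show ?thesis using False by (rule is_path_start_vertex)
qed (use root_vertex in simp)

lemma ancestor_antisym:
  assumes "y \<in> {1..n}" "ancestor x y" "ancestor y x"
  shows "x = y"
proof (rule ccontr)
  assume "x \<noteq> y"
  then have "length (root_path x) < length (root_path y)"
    using assms(1,2) by (rule ancestor_length_less[rotated 2])
  moreover have "length (root_path y) < length (root_path x)"
    using ancestor_length_less[OF ancestor_vertex[OF assms(1,2)] assms(3)] \<open>x \<noteq> y\<close> by simp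
  ultimately show False by simp
qed

lemma ancestor_parent: "y \<in> {1..n} \<Longrightarrow> y \<noteq> n \<Longrightarrow> ancestor (parent y) y"
  using ancestor_iff_parent ancestor_refl parent_vertex by blast

lemma parent_eq_if_not_ancestor:
  assumes "adj E x y" "\<not> ancestor y x"
  shows "y \<noteq> n \<and> parent y = x"
proof -
  have x: "x \<in> {1..n}" using adj_vertices assms(1) by blast
  have p: "is_path E (root_path x) x n" using x by (rule is_path_root_path)
  moreover have hd: "hd (root_path x) = x" "root_path x \<noteq> []" using p by (auto simp: is_path_def)
  ultimately have "is_path E (y # root_path x) y n"
    using assms adj_sym[OF assms(1)] by (auto simp: is_path_Cons ancestor_def)
  then have "root_path y = y # root_path x" by (rule root_path_eq)
  then show ?thesis
    using hd assms(2) ancestor_root[OF x] by (auto simp: parent_def hd_conv_nth)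
qed

lemma adj_imp_parent:
  assumes "adj E x y"
  shows "(x \<noteq> n \<and> parent x = y) \<or> (y \<noteq> n \<and> parent y = x)"
proof -
  have "x \<noteq> y" "y \<in> {1..n}" using assms adj_vertices by (auto simp: adj_def)
  then have "\<not> ancestor y x \<or> \<not> ancestor x y" using ancestor_antisym by blast
  then show ?thesis using parent_eq_if_not_ancestor assms adj_sym by blast
qed

lemma inj_on_parent_edge: "inj_on (\<lambda>v. {v, parent v}) {1..n-1}"
proof (rule inj_onI)
  fix u v assume u: "u \<in> {1..n-1}" and v: "v \<in> {1..n-1}" and eq: "{u, parent u} = {v, parent v}"
  show "u = v"
  proof (rule ccontr)
    assume "u \<noteq> v"
    then have "u = parent v" "v = parent u" using eq by (auto simp: doubleton_eq_iff)
    moreover have "ancestor (parent u) u" "ancestor (parent v) v"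
      using u v ancestor_parent by auto
    moreover have "u \<in> {1..n}" using u by auto
    ultimately show False using ancestor_antisym \<open>u \<noteq> v\<close> by metis
  qed
qed

lemma zeta_eq_ancestor: "y \<in> {1..n} \<Longrightarrow> zeta n E x y = (if ancestor x y then 1 else 0)"
  unfolding zeta_def ancestor_def using is_path_root_path root_path_eq by metis

section \<open>Steiner distance in a tree\<close>

text \<open>A non-root vertex \<open>v\<close> stands for the edge \<open>{v, parent v}\<close>; it is split by \<open>W\<close> when
  this edge separates \<open>W\<close>.\<close>

definition split_vertices :: "nat set \<Rightarrow> nat set" where
  "split_vertices W = {v \<in> {1..n-1}. (\<exists>y\<in>W. ancestor v y) \<and> (\<exists>y\<in>W. \<not> ancestor v y)}"

definition split_edges :: "nat set \<Rightarrow> nat set set" where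
  "split_edges W = (\<lambda>v. {v, parent v}) ` split_vertices W"

lemma split_vertices_subset: "split_vertices W \<subseteq> {1..n-1}"
  by (auto simp: split_vertices_def)

lemma card_split_edges: "card (split_edges W) = card (split_vertices W)"
  unfolding split_edges_def
  by (rule card_image[OF inj_on_subset[OF inj_on_parent_edge split_vertices_subset]])

lemma adj_split_edges: "v \<in> split_vertices W \<Longrightarrow> adj (split_edges W) v (parent v)"
  using root_path_Cons[of v] split_vertices_subset
  by (fastforce simp: split_edges_def adj_def)

lemma split_edges_subset: "split_edges W \<subseteq> E"
  using root_path_Cons split_vertices_subset by (fastforce simp: split_edges_def adj_def)

lemma parent_edge_mem_if_split:
  assumes "F \<subseteq> E" "W \<subseteq> W'" "connected_graph W' F" "v \<in> split_vertices W"
  shows "{v, parent v} \<in> F"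
proof -
  obtain a b where "a \<in> W" "ancestor v a" "b \<in> W" "\<not> ancestor v b"
    using assms(4) by (auto simp: split_vertices_def)
  moreover from calculation have "(adj F)\<^sup>*\<^sup>* a b"
    using assms(2,3) by (auto simp: connected_graph_def)
  ultimately obtain x y where xy: "adj F x y" "ancestor v x" "\<not> ancestor v y"
    using rtranclp_crossing[of "adj F" a b "ancestor v"] by blast
  then have "adj E x y" using assms(1) by (auto simp: adj_def)
  have "x \<in> {1..n}" "y \<in> {1..n}" using adj_vertices \<open>adj E x y\<close> by auto
  from adj_imp_parent[OF \<open>adj E x y\<close>] have "x = v \<and> y = parent v"
  proof
    assume "x \<noteq> n \<and> parent x = y"
    then show ?thesis using xy(2,3) ancestor_iff_parent[OF \<open>x \<in> {1..n}\<close>] by auto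
  next
    assume "y \<noteq> n \<and> parent y = x"
    then show ?thesis using xy(2,3) ancestor_iff_parent[OF \<open>y \<in> {1..n}\<close>] by auto
  qed
  then show ?thesis using xy(1) by (auto simp: adj_def)
qed

lemma card_split_vertices_le:
  assumes "F \<subseteq> E" "W \<subseteq> W'" "connected_graph W' F"
  shows "card (split_vertices W) \<le> card F"
proof -
  have "split_edges W \<subseteq> F"
    using parent_edge_mem_if_split[OF assms] by (auto simp: split_edges_def)
  moreover have "finite F" using assms(1) finite_edges by (rule finite_subset)
  ultimately show ?thesis by (metis card_mono card_split_edges)
qed

definition lowest_common_ancestor :: "nat set \<Rightarrow> nat \<Rightarrow> bool" where
  "lowest_common_ancestor W r \<longleftrightarrow>
     (\<forall>y\<in>W. ancestor r y) \<and> (\<forall>u. (\<forall>y\<in>W. ancestor u y) \<longrightarrow> ancestor u r)"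

lemma ex_lowest_common_ancestor:
  assumes "W \<subseteq> {1..n}" "W \<noteq> {}"
  shows "\<exists>r. lowest_common_ancestor W r"
proof -
  define C where "C = {u \<in> {1..n}. \<forall>y\<in>W. ancestor u y}"
  have "n \<in> C" using assms(1) root_vertex ancestor_root by (auto simp: C_def)
  moreover have fin: "finite ((\<lambda>u. length (root_path u)) ` C)" by (simp add: C_def)
  ultimately obtain r where "r \<in> C" "length (root_path r) = Max ((\<lambda>u. length (root_path u)) ` C)"
    using Max_in[OF fin] by fastforce
  with fin have r: "r \<in> C" "\<And>u. u \<in> C \<Longrightarrow> length (root_path u) \<le> length (root_path r)"
    by simp_all
  \<comment> \<open>the deepest common ancestor is the lowest one, as the ancestors of any \<open>y \<in> W\<close> form a chain\<close>
  show ?thesis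
    unfolding lowest_common_ancestor_def
  proof (intro exI conjI allI impI)
    show "\<forall>y\<in>W. ancestor r y" using r(1) by (simp add: C_def)
  next
    fix u assume u: "\<forall>y\<in>W. ancestor u y"
    obtain y where "y \<in> W" using assms(2) by blast
    then have y: "y \<in> {1..n}" "ancestor u y" "ancestor r y"
      using assms(1) u r(1) by (auto simp: C_def)
    then have "u \<in> C" using u ancestor_vertex[OF y(1,2)] by (simp add: C_def)
    show "ancestor u r"
    proof (rule ccontr)
      assume "\<not> ancestor u r"
      moreover have "u \<in> {1..n}" using \<open>u \<in> C\<close> by (simp add: C_def)
      ultimately have "ancestor r u" "u \<noteq> r"
        using ancestor_linear[OF y] ancestor_refl by auto
      then have "length (root_path r) < length (root_path u)"
        using ancestor_length_less \<open>u \<in> {1..n}\<close> by blast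
      then show False using r(2)[OF \<open>u \<in> C\<close>] by simp
    qed
  qed
qed

lemma rtranclp_split_edges_to_lca:
  assumes r: "lowest_common_ancestor W r"
    and x: "y \<in> W" "y \<in> {1..n}" "ancestor x y" "ancestor r x"
  shows "(adj (split_edges W))\<^sup>*\<^sup>* x r"
  using x
proof (induction "length (root_path x)" arbitrary: x rule: less_induct)
  case less
  show ?case
  proof (cases "x = r")
    case False
    have x: "x \<in> {1..n}" using ancestor_vertex less.prems(2,3) by blast
    have "x \<noteq> n" using less.prems(4) False ancestor_of_root by auto
    have "\<not> ancestor x r" using ancestor_antisym[OF x less.prems(4)] False by blast
    then have "\<exists>y'\<in>W. \<not> ancestor x y'" using r by (auto simp: lowest_common_ancestor_def)
    then have split: "x \<in> split_vertices W"
      using less.prems(1,3) x \<open>x \<noteq> n\<close> by (auto simp: split_vertices_def)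
    have "root_path x = x # root_path (parent x)"
      using root_path_Cons x \<open>x \<noteq> n\<close> by blast
    moreover have "ancestor (parent x) y"
      using ancestor_trans[OF less.prems(2) ancestor_parent[OF x \<open>x \<noteq> n\<close>] less.prems(3)] .
    moreover have "ancestor r (parent x)"
      using ancestor_iff_parent[OF x] less.prems(4) False by auto
    ultimately have "(adj (split_edges W))\<^sup>*\<^sup>* (parent x) r"
      using less.hyps less.prems(1,2) by simp
    with adj_split_edges[OF split] show ?thesis by (rule converse_rtranclp_into_rtranclp)
  qed simp
qed

lemma rtranclp_split_edges_from_split_vertex:
  assumes "lowest_common_ancestor W r" "W \<subseteq> {1..n}" "v \<in> split_vertices W"
  shows "(adj (split_edges W))\<^sup>*\<^sup>* v r"
proof -
  have r: "\<forall>y\<in>W. ancestor r y" using assms(1) by (simp add: lowest_common_ancestor_def)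
  obtain y y' where y: "y \<in> W" "ancestor v y" and y': "y' \<in> W" "\<not> ancestor v y'"
    using assms(3) by (auto simp: split_vertices_def)
  have "y \<in> {1..n}" "y' \<in> {1..n}" using y(1) y'(1) assms(2) by auto
  have "\<not> ancestor v r"
    using ancestor_trans[OF \<open>y' \<in> {1..n}\<close> _ r[rule_format, OF y'(1)]] y'(2) by blast
  then have "ancestor r v"
    using ancestor_linear[OF \<open>y \<in> {1..n}\<close> y(2) r[rule_format, OF y(1)]] by blast
  then show ?thesis
    using rtranclp_split_edges_to_lca[OF assms(1) y(1) \<open>y \<in> {1..n}\<close> y(2)] by blast
qed

lemma connected_split_edges:
  assumes "W \<subseteq> {1..n}" "W \<noteq> {}"
  shows "connected_graph (W \<union> \<Union>(split_edges W)) (split_edges W)"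
proof -
  obtain r where lca: "lowest_common_ancestor W r"
    using ex_lowest_common_ancestor assms by blast
  note split_to_r = rtranclp_split_edges_from_split_vertex[OF lca assms(1)]
  have to_r: "(adj (split_edges W))\<^sup>*\<^sup>* z r" if "z \<in> W \<union> \<Union>(split_edges W)" for z
    using that
  proof
    assume "z \<in> W"
    moreover have "ancestor r z" using lca \<open>z \<in> W\<close> by (simp add: lowest_common_ancestor_def)
    ultimately show ?thesis
      using rtranclp_split_edges_to_lca[OF lca] ancestor_refl assms(1) by blast
  next
    assume "z \<in> \<Union>(split_edges W)"
    then obtain v where v: "v \<in> split_vertices W" "z = v \<or> z = parent v"
      by (auto simp: split_edges_def)
    have "adj (split_edges W) (parent v) v" using adj_sym adj_split_edges[OF v(1)] by blast
    then have "(adj (split_edges W))\<^sup>*\<^sup>* (parent v) r"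
      using split_to_r[OF v(1)] by (rule converse_rtranclp_into_rtranclp)
    then show ?thesis using v(2) split_to_r[OF v(1)] by blast
  qed
  show ?thesis
    unfolding connected_graph_def
  proof (intro ballI)
    fix x y assume "x \<in> W \<union> \<Union>(split_edges W)" "y \<in> W \<union> \<Union>(split_edges W)"
    then have "(adj (split_edges W))\<^sup>*\<^sup>* x r" "(adj (split_edges W))\<^sup>*\<^sup>* r y"
      using to_r rtranclp_adj_sym by blast+
    then show "(adj (split_edges W))\<^sup>*\<^sup>* x y" by (rule rtranclp_trans)
  qed
qed

lemma steiner_eq_card_split_vertices:
  assumes "W \<subseteq> {1..n}" "W \<noteq> {}"
  shows "steiner n E W = card (split_vertices W)"
proof -
  define S where "S = {card F | F W'. F \<subseteq> E \<and> W' \<subseteq> {1..n} \<and> W \<subseteq> W' \<and>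
                          (\<forall>e\<in>F. e \<subseteq> W') \<and> connected_graph W' F}"
  have "S \<subseteq> card ` Pow E" by (auto simp: S_def)
  then have "finite S" using finite_edges finite_subset by blast
  moreover have "\<forall>s\<in>S. card (split_vertices W) \<le> s"
    using card_split_vertices_le by (auto simp: S_def)
  moreover have "card (split_vertices W) \<in> S"
  proof -
    have "\<Union>(split_edges W) \<subseteq> {1..n}" using split_edges_subset edge_subset by blast
    then show ?thesis
      unfolding S_def mem_Collect_eq
      using assms(1) split_edges_subset connected_split_edges[OF assms] card_split_edges
      by (intro exI[of _ "split_edges W"] exI[of _ "W \<union> \<Union>(split_edges W)"]) auto
  qed
  ultimately have "Min S = card (split_vertices W)" by (intro Min_eqI) auto
  then show ?thesis unfolding steiner_def S_def .
qed

end

section \<open>Multilinear forms of hypermatrices\<close>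

lemma hm_indices_0: "hm_indices n 0 = {[]}"
  by (auto simp: hm_indices_def)

lemma hm_indices_Suc:
  "hm_indices n (Suc k) = (\<lambda>(a, i). a # i) ` ({1..n} \<times> hm_indices n k)"
proof (intro set_eqI iffI)
  fix x assume "x \<in> hm_indices n (Suc k)"
  then obtain a i where "x = a # i" "a \<in> {1..n}" "i \<in> hm_indices n k"
    by (cases x) (auto simp: hm_indices_def)
  then show "x \<in> (\<lambda>(a, i). a # i) ` ({1..n} \<times> hm_indices n k)" by force
qed (auto simp: hm_indices_def)

lemma finite_hm_indices: "finite (hm_indices n k)"
  by (induction k) (simp_all add: hm_indices_0 hm_indices_Suc)

lemma sum_hm_indices_prod:
  fixes f :: "nat \<Rightarrow> nat \<Rightarrow> 'a :: comm_semiring_1"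
  shows "(\<Sum>i\<in>hm_indices n k. \<Prod>j<k. f j (i ! j)) = (\<Prod>j<k. \<Sum>y\<in>{1..n}. f j y)"
proof (induction k arbitrary: f)
  case 0
  show ?case by (simp add: hm_indices_0)
next
  case (Suc k)
  have inj: "inj_on (\<lambda>(a, i). a # i) ({1..n} \<times> hm_indices n k)" by (auto simp: inj_on_def)
  have "(\<Sum>i\<in>hm_indices n (Suc k). \<Prod>j<Suc k. f j (i ! j))
      = (\<Sum>a\<in>{1..n}. \<Sum>i\<in>hm_indices n k. f 0 a * (\<Prod>j<k. f (Suc j) (i ! j)))"
    unfolding hm_indices_Suc sum.reindex[OF inj] prod.lessThan_Suc_shift
    by (simp add: sum.cartesian_product case_prod_unfold)
  also have "\<dots> = (\<Sum>a\<in>{1..n}. f 0 a) * (\<Sum>i\<in>hm_indices n k. \<Prod>j<k. f (Suc j) (i ! j))"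
    by (simp add: sum_product)
  also have "\<dots> = (\<Sum>a\<in>{1..n}. f 0 a) * (\<Prod>j<k. \<Sum>y\<in>{1..n}. f (Suc j) y)"
    using Suc.IH[of "\<lambda>j. f (Suc j)"] by simp
  also have "\<dots> = (\<Prod>j<Suc k. \<Sum>y\<in>{1..n}. f j y)"
    by (simp only: prod.lessThan_Suc_shift)
  finally show ?case .
qed

lemma prod_of_bool_mult:
  fixes f :: "'b \<Rightarrow> 'a :: comm_semiring_1"
  assumes "finite A"
  shows "(\<Prod>j\<in>A. of_bool (P j) * f j) = of_bool (\<forall>j\<in>A. P j) * prod f A"
proof (cases "\<forall>j\<in>A. P j")
  case False
  then show ?thesis using assms by (auto intro!: prod_zero)
qed simp

lemma sum_hm_indices_of_bool_prod:
  fixes f :: "nat \<Rightarrow> nat \<Rightarrow> 'a :: comm_semiring_1"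
  shows "(\<Sum>i\<in>hm_indices n k. of_bool (\<forall>j<k. P (i ! j)) * (\<Prod>j<k. f j (i ! j)))
    = (\<Prod>j<k. \<Sum>y\<in>{1..n}. of_bool (P y) * f j y)"
  using sum_hm_indices_prod[where f = "\<lambda>j y. of_bool (P y) * f j y" and n = n and k = k]
  by (simp add: prod_of_bool_mult Ball_def del: sum_mult_of_bool_eq sum_of_bool_mult_eq)

lemma hm_form_diff_scaled:
  "hm_form n k (\<lambda>i. H i - a * G i) x = hm_form n k H x - a * hm_form n k G x"
  by (simp add: hm_form_def algebra_simps sum_subtractf sum_distrib_left)

lemma hm_form_supported:
  assumes "inj_on g A" "g ` A \<subseteq> hm_indices n k"
    and "\<And>i. i \<in> hm_indices n k \<Longrightarrow> i \<notin> g ` A \<Longrightarrow> H i = 0"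
  shows "hm_form n k H x = (\<Sum>a\<in>A. H (g a) * (\<Prod>j<k. x j (g a ! j)))"
proof -
  have "hm_form n k H x = (\<Sum>i\<in>g ` A. H i * (\<Prod>j<k. x j (i ! j)))"
    unfolding hm_form_def using assms(2,3)
    by (intro sum.mono_neutral_right[OF finite_hm_indices]) auto
  also have "\<dots> = (\<Sum>a\<in>A. H (g a) * (\<Prod>j<k. x j (g a ! j)))"
    using assms(1) by (simp add: sum.reindex)
  finally show ?thesis .
qed

lemma hm_form_Id_hm:
  assumes "k \<ge> 1"
  shows "hm_form n k (Id_hm n k) x = (\<Sum>v\<in>{1..n-1}. \<Prod>j<k. x j v)"
proof -
  have "inj_on (replicate k) {1..n-1}"
    using assms by (intro inj_onI) (metis One_nat_def Suc_le_lessD nth_replicate)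
  moreover have "replicate k ` {1..n-1} \<subseteq> hm_indices n k"
    by (auto simp: hm_indices_def)
  moreover have "Id_hm n k i = 0" if "i \<in> hm_indices n k" "i \<notin> replicate k ` {1..n-1}" for i
  proof -
    have "i = replicate k v" if "\<forall>j<k. i ! j = v" for v
      using that \<open>i \<in> hm_indices n k\<close> by (intro nth_equalityI) (auto simp: hm_indices_def)
    then show ?thesis using that by (auto simp: Id_hm_def)
  qed
  ultimately have "hm_form n k (Id_hm n k) x
      = (\<Sum>v\<in>{1..n-1}. Id_hm n k (replicate k v) * (\<Prod>j<k. x j (replicate k v ! j)))"
    by (rule hm_form_supported)
  also have "\<dots> = (\<Sum>v\<in>{1..n-1}. \<Prod>j<k. x j v)"
    using assms by (intro sum.cong refl) (auto simp: Id_hm_def)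
  finally show ?thesis .
qed

definition proper_index_sets :: "nat \<Rightarrow> nat set set" where
  "proper_index_sets k = {S. S \<subseteq> {..<k} \<and> S \<noteq> {} \<and> S \<noteq> {..<k}}"

definition mixed_index :: "nat \<Rightarrow> nat \<Rightarrow> nat \<Rightarrow> nat set \<Rightarrow> nat list" where
  "mixed_index n k w S = map (\<lambda>j. if j \<in> S then w else n) [0..<k]"

lemma finite_proper_index_sets: "finite (proper_index_sets k)"
  by (rule finite_subset[of _ "Pow {..<k}"]) (auto simp: proper_index_sets_def)

lemma card_proper_index_set:
  assumes "S \<in> proper_index_sets k"
  shows "1 \<le> card S \<and> card S \<le> k - 1"
proof -
  have S: "S \<subseteq> {..<k}" "S \<noteq> {}" "S \<noteq> {..<k}" using assms by (auto simp: proper_index_sets_def)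
  then have "finite S" using finite_subset by blast
  with S have "0 < card S" by (simp add: card_gt_0_iff)
  moreover have "card S < card {..<k}" using S by (intro psubset_card_mono) auto
  ultimately show ?thesis by simp
qed

lemma length_mixed_index [simp]: "length (mixed_index n k w S) = k"
  by (simp add: mixed_index_def)

lemma nth_mixed_index [simp]: "j < k \<Longrightarrow> mixed_index n k w S ! j = (if j \<in> S then w else n)"
  by (simp add: mixed_index_def)

lemma U_cond_iff_mixed_index:
  assumes "length i = k"
  shows "U_cond n k i t \<longleftrightarrow>
    (\<exists>w\<in>{1..n-1}. \<exists>S\<in>proper_index_sets k. card S = t \<and> i = mixed_index n k w S)"
proof
  assume "U_cond n k i t"
  then obtain w S where h: "w \<in> {1..n-1}" "S \<subseteq> {..<k}" "card S = t" "1 \<le> t" "t \<le> k - 1"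
      "\<forall>j<k. i ! j = (if j \<in> S then w else n)"
    unfolding U_cond_def by blast
  have "i = mixed_index n k w S" using assms h(6) by (intro nth_equalityI) auto
  moreover have "S \<in> proper_index_sets k"
    using h(2-5) by (auto simp: proper_index_sets_def)
  ultimately show "\<exists>w\<in>{1..n-1}. \<exists>S\<in>proper_index_sets k. card S = t \<and> i = mixed_index n k w S"
    using h(1,3) by blast
next
  assume "\<exists>w\<in>{1..n-1}. \<exists>S\<in>proper_index_sets k. card S = t \<and> i = mixed_index n k w S"
  then obtain w S where "w \<in> {1..n-1}" "S \<in> proper_index_sets k" "card S = t"
    "i = mixed_index n k w S"
    by blast
  moreover from this(2) have "S \<subseteq> {..<k}" by (simp add: proper_index_sets_def)
  ultimately show "U_cond n k i t"
    unfolding U_cond_def using card_proper_index_set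
    by (intro bexI[of _ w] exI[of _ S]) auto
qed

lemma mixed_index_eq_iff:
  assumes "w \<in> {1..n-1}" "w' \<in> {1..n-1}" "S \<in> proper_index_sets k" "S' \<in> proper_index_sets k"
  shows "mixed_index n k w S = mixed_index n k w' S' \<longleftrightarrow> w = w' \<and> S = S'"
proof
  assume eq: "mixed_index n k w S = mixed_index n k w' S'"
  have "w \<noteq> n" "w' \<noteq> n" using assms(1,2) by auto
  have "j \<in> S \<longleftrightarrow> j \<in> S'" if "j < k" for j
    using arg_cong[OF eq, of "\<lambda>i. i ! j"] that \<open>w \<noteq> n\<close> \<open>w' \<noteq> n\<close> by (auto split: if_splits)
  then have "S = S'" using assms(3,4) by (auto simp: proper_index_sets_def)
  moreover obtain j where "j \<in> S" "j < k" using assms(3) by (auto simp: proper_index_sets_def)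
  ultimately show "w = w' \<and> S = S'" using arg_cong[OF eq, of "\<lambda>i. i ! j"] by simp
qed simp

lemma U_hm_mixed_index:
  assumes "w \<in> {1..n-1}" "S \<in> proper_index_sets k"
  shows "U_hm n k (mixed_index n k w S) = (-1) ^ (card S - 1)"
proof -
  have "U_cond n k (mixed_index n k w S) = (\<lambda>t. t = card S)"
    using assms mixed_index_eq_iff by (auto simp: U_cond_iff_mixed_index)
  then show ?thesis by (simp add: U_hm_def)
qed

lemma hm_form_U_hm:
  "hm_form n k (U_hm n k) x =
    (\<Sum>w\<in>{1..n-1}. \<Sum>S\<in>proper_index_sets k.
        (-1) ^ (card S - 1) * (\<Prod>j<k. if j \<in> S then x j w else x j n))"
proof -
  let ?g = "\<lambda>(w, S). mixed_index n k w S"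
  have "inj_on ?g ({1..n-1} \<times> proper_index_sets k)"
    using mixed_index_eq_iff by (auto intro!: inj_onI)
  moreover have "?g ` ({1..n-1} \<times> proper_index_sets k) \<subseteq> hm_indices n k"
    by (auto simp: hm_indices_def mixed_index_def)
  moreover have "U_hm n k i = 0"
    if "i \<in> hm_indices n k" "i \<notin> ?g ` ({1..n-1} \<times> proper_index_sets k)" for i
  proof (rule ccontr)
    assume "U_hm n k i \<noteq> 0"
    then obtain t where "U_cond n k i t" by (auto simp: U_hm_def split: if_splits)
    moreover have "length i = k" using that(1) by (simp add: hm_indices_def)
    ultimately obtain w S where "w \<in> {1..n-1}" "S \<in> proper_index_sets k" "i = mixed_index n k w S"
      using U_cond_iff_mixed_index by blast
    then show False using that(2) by force
  qed
  ultimately have "hm_form n k (U_hm n k) x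
      = (\<Sum>a\<in>{1..n-1} \<times> proper_index_sets k. U_hm n k (?g a) * (\<Prod>j<k. x j (?g a ! j)))"
    by (rule hm_form_supported)
  also have "\<dots> = (\<Sum>w\<in>{1..n-1}. \<Sum>S\<in>proper_index_sets k.
        (-1) ^ (card S - 1) * (\<Prod>j<k. if j \<in> S then x j w else x j n))"
    unfolding sum.cartesian_product
    by (intro sum.cong refl) (auto simp: U_hm_mixed_index if_distrib intro!: prod.cong)
  finally show ?thesis .
qed

lemma prod_diff_expansion:
  fixes s d :: "nat \<Rightarrow> 'a :: comm_ring_1"
  assumes "k \<ge> 1"
  shows "(\<Prod>j<k. s j) - (\<Prod>j<k. d j) - (\<Prod>j<k. s j - d j) =
    (\<Sum>S\<in>proper_index_sets k. (-1) ^ (card S - 1) * (\<Prod>j<k. if j \<in> S then d j else s j))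
      - (if even k then 2 else 0) * (\<Prod>j<k. d j)"
proof -
  define T where "T S = (\<Prod>j<k. if j \<in> S then d j else s j)" for S
  define \<Sigma> where "\<Sigma> = (\<Sum>S\<in>proper_index_sets k. (-1) ^ (card S - 1) * T S)"
  have "(\<Prod>j<k. s j - d j) = (\<Sum>S\<in>Pow {..<k}. (-1) ^ card S * T S)"
  proof -
    have "T S = (\<Prod>j\<in>S. d j) * (\<Prod>j\<in>{..<k} - S. s j)" if "S \<subseteq> {..<k}" for S
    proof -
      have "{..<k} \<inter> {j. j \<in> S} = S" "{..<k} \<inter> - {j. j \<in> S} = {..<k} - S" using that by auto
      then show ?thesis unfolding T_def by (simp add: prod.If_cases)
    qed
    then show ?thesis
      by (simp add: prod_diff_conv_sum mult.assoc)
  qed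
  also have "Pow {..<k} = insert {} (insert {..<k} (proper_index_sets k))"
    by (auto simp: proper_index_sets_def)
  also have "(\<Sum>S\<in>insert {} (insert {..<k} (proper_index_sets k)). (-1) ^ card S * T S)
      = (\<Prod>j<k. s j) + (-1) ^ k * (\<Prod>j<k. d j) - \<Sigma>"
  proof -
    have "(-1) ^ card S * T S = - ((-1) ^ (card S - 1) * T S)" if "S \<in> proper_index_sets k" for S
      using card_proper_index_set[OF that] by (cases "card S") simp_all
    then have "(\<Sum>S\<in>proper_index_sets k. (-1) ^ card S * T S) = - \<Sigma>"
      unfolding \<Sigma>_def by (simp add: sum_negf)
    moreover have "{} \<noteq> {..<k}" "{} \<notin> proper_index_sets k" "{..<k} \<notin> proper_index_sets k"
      using assms by (auto simp: proper_index_sets_def eq_commute[of "{}"] lessThan_empty_iff)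
    ultimately show ?thesis
      by (simp add: finite_proper_index_sets T_def)
  qed
  finally show ?thesis
    unfolding \<Sigma>_def T_def by (simp add: algebra_simps)
qed

section \<open>The Steiner form in zeta coordinates\<close>

context rooted_tree
begin

lemma zeta_mult_eq_sum_descendants:
  "zeta_mult n E f x = (\<Sum>y\<in>{1..n}. of_bool (ancestor x y) * f y)"
  unfolding zeta_mult_def by (intro sum.cong refl) (simp add: zeta_eq_ancestor)

lemma zeta_mult_root: "zeta_mult n E f n = (\<Sum>y\<in>{1..n}. f y)"
  unfolding zeta_mult_eq_sum_descendants by (intro sum.cong refl) (simp add: ancestor_root)

lemma sum_non_descendants:
  "(\<Sum>y\<in>{1..n}. of_bool (\<not> ancestor x y) * f y) = zeta_mult n E f n - zeta_mult n E f x"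
proof -
  have "(\<Sum>y\<in>{1..n}. f y)
      = (\<Sum>y\<in>{1..n}. of_bool (ancestor x y) * f y) + (\<Sum>y\<in>{1..n}. of_bool (\<not> ancestor x y) * f y)"
    by (simp only: sum.distrib[symmetric]) (intro sum.cong refl, simp)
  then show ?thesis unfolding zeta_mult_root zeta_mult_eq_sum_descendants[of f x] by simp
qed

lemma steiner_eq_sum_indicators:
  assumes "i \<in> hm_indices n k" "k \<ge> 1"
  shows "real (steiner n E (set i)) = (\<Sum>v\<in>{1..n-1}.
    1 - of_bool (\<forall>j<k. ancestor v (i ! j)) - of_bool (\<forall>j<k. \<not> ancestor v (i ! j)))"
proof -
  have i: "length i = k" "set i \<subseteq> {1..n}" using assms(1) by (auto simp: hm_indices_def)
  then have "set i \<noteq> {}" using assms(2) by auto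
  then have "real (steiner n E (set i)) = (\<Sum>v\<in>{1..n-1}. of_bool (v \<in> split_vertices (set i)))"
    using steiner_eq_card_split_vertices[OF i(2)] split_vertices_subset
    by (simp add: Int_absorb1)
  also have "\<dots> = (\<Sum>v\<in>{1..n-1}.
    1 - of_bool (\<forall>j<k. ancestor v (i ! j)) - of_bool (\<forall>j<k. \<not> ancestor v (i ! j)))"
  proof (intro sum.cong refl)
    fix v assume "v \<in> {1..n-1}"
    moreover have "\<And>P. (\<exists>y\<in>set i. P y) \<longleftrightarrow> (\<exists>j<k. P (i ! j))"
      using i(1) by (metis in_set_conv_nth)
    ultimately have "v \<in> split_vertices (set i) \<longleftrightarrow>
        (\<exists>j<k. ancestor v (i ! j)) \<and> (\<exists>j<k. \<not> ancestor v (i ! j))"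
      by (simp add: split_vertices_def)
    moreover have "0 < k" using assms(2) by simp
    ultimately show "of_bool (v \<in> split_vertices (set i)) =
        (1::real) - of_bool (\<forall>j<k. ancestor v (i ! j)) - of_bool (\<forall>j<k. \<not> ancestor v (i ! j))"
      by auto
  qed
  finally show ?thesis .
qed

lemma hm_form_steiner_hm:
  assumes "k \<ge> 1"
  shows "hm_form n k (steiner_hm n E) c = (\<Sum>v\<in>{1..n-1}.
    (\<Prod>j<k. zeta_mult n E (c j) n) - (\<Prod>j<k. zeta_mult n E (c j) v)
      - (\<Prod>j<k. zeta_mult n E (c j) n - zeta_mult n E (c j) v))"
proof -
  let ?p = "\<lambda>i. \<Prod>j<k. c j (i ! j)"
  have "hm_form n k (steiner_hm n E) c = (\<Sum>v\<in>{1..n-1}. \<Sum>i\<in>hm_indices n k.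
      ?p i - of_bool (\<forall>j<k. ancestor v (i ! j)) * ?p i - of_bool (\<forall>j<k. \<not> ancestor v (i ! j)) * ?p i)"
    unfolding hm_form_def steiner_hm_def
    by (subst sum.swap, intro sum.cong refl)
      (simp add: steiner_eq_sum_indicators[OF _ assms] sum_distrib_right left_diff_distrib)
  also have "\<dots> = (\<Sum>v\<in>{1..n-1}.
    (\<Prod>j<k. zeta_mult n E (c j) n) - (\<Prod>j<k. zeta_mult n E (c j) v)
      - (\<Prod>j<k. zeta_mult n E (c j) n - zeta_mult n E (c j) v))"
  proof (intro sum.cong refl)
    fix v
    have "(\<Sum>i\<in>hm_indices n k. ?p i) = (\<Prod>j<k. zeta_mult n E (c j) n)"
      unfolding zeta_mult_root by (rule sum_hm_indices_prod)
    moreover have "(\<Sum>i\<in>hm_indices n k. of_bool (\<forall>j<k. ancestor v (i ! j)) * ?p i)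
        = (\<Prod>j<k. zeta_mult n E (c j) v)"
      unfolding zeta_mult_eq_sum_descendants by (rule sum_hm_indices_of_bool_prod)
    moreover have "(\<Sum>i\<in>hm_indices n k. of_bool (\<forall>j<k. \<not> ancestor v (i ! j)) * ?p i)
        = (\<Prod>j<k. zeta_mult n E (c j) n - zeta_mult n E (c j) v)"
      unfolding sum_non_descendants[symmetric] by (rule sum_hm_indices_of_bool_prod)
    ultimately show "(\<Sum>i\<in>hm_indices n k. ?p i - of_bool (\<forall>j<k. ancestor v (i ! j)) * ?p i
          - of_bool (\<forall>j<k. \<not> ancestor v (i ! j)) * ?p i)
        = (\<Prod>j<k. zeta_mult n E (c j) n) - (\<Prod>j<k. zeta_mult n E (c j) v)
          - (\<Prod>j<k. zeta_mult n E (c j) n - zeta_mult n E (c j) v)"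
      by (simp only: sum_subtractf)
  qed
  finally show ?thesis .
qed

end

theorem mainTheorem7:
  fixes n k :: nat and E :: "nat set set" and c :: "nat \<Rightarrow> nat \<Rightarrow> real"
  assumes "n \<ge> 2" and "k \<ge> 2" and "is_tree n E"
  shows "hm_form n k (steiner_hm n E) c =
    (if even k
     then hm_form n k (\<lambda>i. U_hm n k i - 2 * Id_hm n k i) (\<lambda>j. zeta_mult n E (c j))
     else hm_form n k (U_hm n k) (\<lambda>j. zeta_mult n E (c j)))"
proof -
  interpret rooted_tree n E using assms(1,3) by unfold_locales simp_all
  define g where "g = (\<lambda>j. zeta_mult n E (c j))"
  have "k \<ge> 1" using assms(2) by simp
  have "hm_form n k (steiner_hm n E) c = (\<Sum>v\<in>{1..n-1}.
      (\<Sum>S\<in>proper_index_sets k. (-1) ^ (card S - 1) * (\<Prod>j<k. if j \<in> S then g j v else g j n))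
        - (if even k then 2 else 0) * (\<Prod>j<k. g j v))"
    unfolding hm_form_steiner_hm[OF \<open>k \<ge> 1\<close>] prod_diff_expansion[OF \<open>k \<ge> 1\<close>] g_def ..
  then show ?thesis
    unfolding g_def[symmetric] hm_form_diff_scaled hm_form_U_hm hm_form_Id_hm[OF \<open>k \<ge> 1\<close>]
    by (simp add: sum_subtractf sum_distrib_left)
qed

end
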